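(* Let $\mathcal A$ be a unital dual Banach algebra with predual $\mathcal A_*$, and let $T\in\mathcal B(\mathcal A,\mathcal A')=(\mathcal A\hat\otimes\mathcal A)'$. The following are equivalent: (a) $T\in\sigma WC(\mathcal B(\mathcal A,\mathcal A'))$; (b) $T(\mathcal A)\subseteq\kappa_{\mathcal A_*}(\mathcal A_* )$, $T'(\kappa_{\mathcal A}(\mathcal A))\subseteq\kappa_{\mathcal A_*}(\mathcal A_* )$, and $T\in\operatorname{WAP}(\mathcal B(\mathcal A,\mathcal A'))$. Moreover, each of these conditions implies that $T$ is weakly compact.
   Context: A dual Banach algebra: a Banach algebra $\mathcal A$ with closed subspace $\mathcal A_*\subseteq\mathcal A'$, a sub-bimodule of $\mathcal A'$ (actions $\langle a\cdot\mu,b\rangle=\mu(ba)$, $\langle\mu\cdot a,b\rangle=\mu(ab)$), such that the canonical map $\mathcal A\to(\mathcal A_* )'$ is a Banach space isomorphism; we identify $\mathcal A=(\mathcal A_* )'$, so $\mathcal A'=(\mathcal A_* )''$ and $\kappa_{\mathcal A_*}:\mathcal A_*\to\mathcal A'$ is the canonical embedding; $\kappa_{\mathcal A}:\mathcal A\to\mathcal A''$ likewise. $(\mathcal A\hat\otimes\mathcal A)'=\mathcal B(\mathcal A,\mathcal A')$ via $\langle T,a\otimes b\rangle=\langle T(b),a\rangle$, with bimodule actions $(a\cdot T)(c)=T(ca)$, $(T\cdot a)(c)=T(c)\cdot a$. $x\in\sigma WC(E)$ iff $a\mapsto a\cdot x$, $a\mapsto x\cdot a$ are $\sigma(\mathcal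 A,\mathcal A_* )$–weak continuous; $x\in\operatorname{WAP}(E)$ iff these maps are weakly compact. *)

theory Defs
  imports "HOL-Analysis.Analysis"
begin

definition weak_top :: "'x::real_normed_vector topology" where
  "weak_top = topology_generated_by
     {{x. blinfun_apply f x \<in> U} | (f :: 'x \<Rightarrow>\<^sub>L real) U. open U}"

text \<open>Weak-star topology sigma(A, A_*) on A, where the predual A_* is a subspace P of A'.\<close>
definition weak_star_top :: "('a::real_normed_vector \<Rightarrow>\<^sub>L real) set \<Rightarrow> 'a topology" where
  "weak_star_top P = topology_generated_by
     {{a. blinfun_apply \<mu> a \<in> U} | \<mu> U. \<mu> \<in> P \<and> open U}"

definition weakly_compact_map :: "('x::real_normed_vector \<Rightarrow> 'y::real_normed_vector) \<Rightarrow> bool" where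
  "weakly_compact_map L \<longleftrightarrow>
     compactin weak_top (weak_top closure_of (L ` cball 0 1))"

definition lact :: "'a::real_normed_algebra \<Rightarrow> ('a \<Rightarrow>\<^sub>L real) \<Rightarrow> ('a \<Rightarrow>\<^sub>L real)" where
  "lact a \<mu> = Blinfun (\<lambda>b. blinfun_apply \<mu> (b * a))"

definition ract :: "('a::real_normed_algebra \<Rightarrow>\<^sub>L real) \<Rightarrow> 'a \<Rightarrow> ('a \<Rightarrow>\<^sub>L real)" where
  "ract \<mu> a = Blinfun (\<lambda>b. blinfun_apply \<mu> (a * b))"

definition blact :: "'a::real_normed_algebra \<Rightarrow> ('a \<Rightarrow>\<^sub>L ('a \<Rightarrow>\<^sub>L real)) \<Rightarrow> ('a \<Rightarrow>\<^sub>L ('a \<Rightarrow>\<^sub>L real))" where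
  "blact a T = Blinfun (\<lambda>c. blinfun_apply T (c * a))"

definition bract :: "('a::real_normed_algebra \<Rightarrow>\<^sub>L ('a \<Rightarrow>\<^sub>L real)) \<Rightarrow> 'a \<Rightarrow> ('a \<Rightarrow>\<^sub>L ('a \<Rightarrow>\<^sub>L real))" where
  "bract T a = Blinfun (\<lambda>c. ract (blinfun_apply T c) a)"

text \<open>Dual Banach algebra with predual P (a closed sub-bimodule of A') such that the canonical
  map A \<rightarrow> P', a \<mapsto> (\<mu> \<mapsto> \<mu> a), is a Banach space isomorphism
  (it is automatically linear and bounded; we require it to be onto and bounded below).\<close>
definition dual_banach_algebra :: "('a::{real_normed_algebra,banach} \<Rightarrow>\<^sub>L real) set \<Rightarrow> bool" where
  "dual_banach_algebra P \<longleftrightarrow>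
     subspace P \<and> closed P \<and>
     (\<forall>\<mu>\<in>P. \<forall>a. lact a \<mu> \<in> P \<and> ract \<mu> a \<in> P) \<and>
     (\<forall>\<phi> :: ('a \<Rightarrow>\<^sub>L real) \<Rightarrow> real.
        (\<forall>\<mu>\<in>P. \<forall>\<nu>\<in>P. \<phi> (\<mu> + \<nu>) = \<phi> \<mu> + \<phi> \<nu>) \<and>
        (\<forall>\<mu>\<in>P. \<forall>c. \<phi> (c *\<^sub>R \<mu>) = c * \<phi> \<mu>) \<and>
        (\<exists>C. \<forall>\<mu>\<in>P. \<bar>\<phi> \<mu>\<bar> \<le> C * norm \<mu>)
        \<longrightarrow> (\<exists>a. \<forall>\<mu>\<in>P. \<phi> \<mu> = blinfun_apply \<mu> a)) \<and>
     (\<exists>c>0. \<forall>a. norm a \<le> c * Sup {\<bar>blinfun_apply \<mu> a\<bar> | \<mu>. \<mu> \<in> P \<and> norm \<mu> \<le> 1})"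

definition sigmaWC :: "('a::{real_normed_algebra,banach} \<Rightarrow>\<^sub>L real) set \<Rightarrow> ('a \<Rightarrow>\<^sub>L ('a \<Rightarrow>\<^sub>L real)) \<Rightarrow> bool" where
  "sigmaWC P T \<longleftrightarrow>
     continuous_map (weak_star_top P) weak_top (\<lambda>a. blact a T) \<and>
     continuous_map (weak_star_top P) weak_top (\<lambda>a. bract T a)"

definition WAP :: "('a \<Rightarrow>\<^sub>L ('a::{real_normed_algebra,banach} \<Rightarrow>\<^sub>L real)) \<Rightarrow> bool" where
  "WAP T \<longleftrightarrow> weakly_compact_map (\<lambda>a. blact a T) \<and> weakly_compact_map (\<lambda>a. bract T a)"

end

theory Submission
  imports Defs
begin

text \<open>
  Let \<open>S\<close> be a bounded linear map from \<open>A\<close> to a Banach space \<open>E\<close>. It is weak*-weak continuous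
  iff every \<open>\<phi> \<circ> S\<close> with \<open>\<phi> \<in> E'\<close> is weak*-continuous, i.e. lies in the predual; then \<open>S\<close> maps
  the weak*-compact unit ball (Banach-Alaoglu) onto a weakly compact set, so \<open>S\<close> is weakly
  compact. Conversely, let \<open>S\<close> be weakly compact with \<open>g \<circ> S\<close> in the predual for every \<open>g\<close> in a
  point-separating family \<open>G \<subseteq> E'\<close>. On the weakly compact closure of the image of the ball, the
  Hausdorff topology induced by \<open>G\<close> coincides with the weak topology, so every \<open>\<phi> \<circ> S\<close> is
  weak*-continuous on the ball; by the Banach-Dieudonne argument (Hahn-Banach in finite
  codimension plus closedness of the predual) it then lies in the predual.

  Apply this to \<open>a \<mapsto> a \<cdot> T\<close> and \<open>a \<mapsto> T \<cdot> a\<close> with \<open>G\<close> the evaluations \<open>X \<mapsto> X(b)(c)\<close>. As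
  \<open>(a \<cdot> T)(b)(c) = T(b a)(c)\<close> and \<open>(T \<cdot> a)(b)(c) = T(b)(a c)\<close>, these are module translates of
  \<open>a \<mapsto> T(a)(c)\<close> and of \<open>T(b)\<close>, and for \<open>b = 1\<close> resp. \<open>c = 1\<close> they are these functionals
  themselves. Finally \<open>T(a) = (a \<cdot> T)(1)\<close>, so \<open>T\<close> is weak*-weak continuous, hence weakly compact.
\<close>

subsection \<open>Initial topologies\<close>

definition initial_topology :: "('x \<Rightarrow> real) set \<Rightarrow> 'x topology" where
  "initial_topology F = topology_generated_by {{x. f x \<in> U} | f U. f \<in> F \<and> open U}"

lemma weak_top_eq_initial_topology: "weak_top = initial_topology (range blinfun_apply)"
  unfolding weak_top_def initial_topology_def by (rule arg_cong[where f=topology_generated_by]) auto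

lemma weak_star_top_eq_initial_topology: "weak_star_top P = initial_topology (blinfun_apply ` P)"
  unfolding weak_star_top_def initial_topology_def by (rule arg_cong[where f=topology_generated_by]) auto

lemma openin_initial_topology_preimage:
  "f \<in> F \<Longrightarrow> open U \<Longrightarrow> openin (initial_topology F) {x. f x \<in> U}"
  unfolding initial_topology_def by (rule topology_generated_by_Basis) blast

lemma topspace_initial_topology:
  assumes "F \<noteq> {}"
  shows "topspace (initial_topology F) = UNIV"
proof -
  obtain f where "f \<in> F" using assms by blast
  then have "openin (initial_topology F) {x. f x \<in> UNIV}"
    by (rule openin_initial_topology_preimage) simp
  then show ?thesis using openin_subset by fastforce
qed

lemma continuous_map_initial_topology:
  assumes "f \<in> F"
  shows "continuous_map (initial_topology F) euclideanreal f"
proof -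
  have "topspace (initial_topology F) = UNIV" using assms by (intro topspace_initial_topology) blast
  then show ?thesis
    using openin_initial_topology_preimage[OF assms] by (simp add: continuous_map_def)
qed

lemma continuous_map_into_initial_topology:
  assumes "F \<noteq> {}" and "\<And>f. f \<in> F \<Longrightarrow> continuous_map X euclideanreal (\<lambda>x. f (g x))"
  shows "continuous_map X (initial_topology F) g"
  unfolding initial_topology_def
proof (rule continuous_on_generated_topo)
  fix V assume "V \<in> {{x. f x \<in> U} | f U. f \<in> F \<and> open U}"
  then obtain f U where V: "V = {x. f x \<in> U}" "f \<in> F" "open U" by auto
  have "openin X {x \<in> topspace X. f (g x) \<in> U}"
    using assms(2)[OF V(2)] V(3) by (simp add: continuous_map_def)
  moreover have "{x \<in> topspace X. f (g x) \<in> U} = g -` V \<inter> topspace X" using V(1) by auto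
  ultimately show "openin X (g -` V \<inter> topspace X)" by simp
next
  show "g ` topspace X \<subseteq> \<Union> {{x. f x \<in> U} | f U. f \<in> F \<and> open U}"
    using topspace_initial_topology[OF assms(1)] unfolding initial_topology_def by simp
qed

lemma Hausdorff_space_initial_topology:
  assumes "\<And>x y. x \<noteq> y \<Longrightarrow> \<exists>f\<in>F. f x \<noteq> f y"
  shows "Hausdorff_space (initial_topology F)"
  unfolding Hausdorff_space_def
proof (intro allI impI)
  fix x y assume "x \<in> topspace (initial_topology F) \<and> y \<in> topspace (initial_topology F) \<and> x \<noteq> y"
  then obtain f where f: "f \<in> F" "f x \<noteq> f y" using assms by blast
  then obtain U V where UV: "open U" "open V" "f x \<in> U" "f y \<in> V" "U \<inter> V = {}"
    using hausdorff[OF f(2)] by blast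
  have "openin (initial_topology F) {z. f z \<in> U}" "openin (initial_topology F) {z. f z \<in> V}"
    using f(1) UV(1,2) by (auto intro: openin_initial_topology_preimage)
  moreover have "disjnt {z. f z \<in> U} {z. f z \<in> V}" using UV(5) by (auto simp: disjnt_def)
  ultimately show "\<exists>U V. openin (initial_topology F) U \<and> openin (initial_topology F) V \<and>
      x \<in> U \<and> y \<in> V \<and> disjnt U V"
    using UV(3,4) by blast
qed

lemma openin_initial_topology_basic_nbhd:
  assumes "openin (initial_topology F) U" "x \<in> U"
  shows "\<exists>G d. finite G \<and> G \<subseteq> F \<and> d > 0 \<and> (\<forall>y. (\<forall>f\<in>G. \<bar>f y - f x\<bar> < d) \<longrightarrow> y \<in> U)"
proof -
  have "generate_topology_on {{x. f x \<in> U} | f U. f \<in> F \<and> open U} U"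
    using assms(1) unfolding initial_topology_def by (rule openin_topology_generated_by)
  then show ?thesis using assms(2)
  proof (induction arbitrary: x)
    case Empty
    then show ?case by simp
  next
    case (Int a b)
    then have "x \<in> a" "x \<in> b" by auto
    obtain G1 d1 where 1: "finite G1" "G1 \<subseteq> F" "d1 > 0" "\<forall>y. (\<forall>f\<in>G1. \<bar>f y - f x\<bar> < d1) \<longrightarrow> y \<in> a"
      using Int.IH(1)[OF \<open>x \<in> a\<close>] by blast
    obtain G2 d2 where 2: "finite G2" "G2 \<subseteq> F" "d2 > 0" "\<forall>y. (\<forall>f\<in>G2. \<bar>f y - f x\<bar> < d2) \<longrightarrow> y \<in> b"
      using Int.IH(2)[OF \<open>x \<in> b\<close>] by blast
    have "\<forall>y. (\<forall>f\<in>G1 \<union> G2. \<bar>f y - f x\<bar> < min d1 d2) \<longrightarrow> y \<in> a \<inter> b"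
      using 1(4) 2(4) by simp
    moreover have "finite (G1 \<union> G2)" "G1 \<union> G2 \<subseteq> F" "min d1 d2 > 0" using 1 2 by auto
    ultimately show ?case by blast
  next
    case (UN K)
    then obtain k where k: "k \<in> K" "x \<in> k" by blast
    obtain G d where "finite G" "G \<subseteq> F" "d > 0" "\<forall>y. (\<forall>f\<in>G. \<bar>f y - f x\<bar> < d) \<longrightarrow> y \<in> k"
      using UN.IH[OF k] by blast
    then show ?case using k(1) by blast
  next
    case (Basis s)
    then obtain f V where s: "s = {x. f x \<in> V}" "f \<in> F" "open V" by auto
    then obtain e where e: "e > 0" "ball (f x) e \<subseteq> V"
      using Basis.prems openE by blast
    then have "\<forall>y. (\<forall>g\<in>{f}. \<bar>g y - g x\<bar> < e) \<longrightarrow> y \<in> s"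
      using s(1) by (auto simp: dist_real_def abs_minus_commute)
    moreover have "finite {f}" "{f} \<subseteq> F" using s(2) by auto
    ultimately show ?case using e(1) by blast
  qed
qed

lemma bounded_linear_imp_mem_range_blinfun_apply:
  "bounded_linear g \<Longrightarrow> g \<in> range blinfun_apply"
  by (metis bounded_linear_Blinfun_apply rangeI)

lemma topspace_weak_top [simp]: "topspace weak_top = UNIV"
  unfolding weak_top_eq_initial_topology by (rule topspace_initial_topology) simp

lemma topspace_weak_star_top: "P \<noteq> {} \<Longrightarrow> topspace (weak_star_top P) = UNIV"
  unfolding weak_star_top_eq_initial_topology by (rule topspace_initial_topology) simp

lemma continuous_map_weak_top_functional:
  assumes "bounded_linear g"
  shows "continuous_map weak_top euclideanreal g"
  unfolding weak_top_eq_initial_topology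
  by (rule continuous_map_initial_topology[OF bounded_linear_imp_mem_range_blinfun_apply[OF assms]])

lemma continuous_map_weak_star_top_functional:
  "\<mu> \<in> P \<Longrightarrow> continuous_map (weak_star_top P) euclideanreal (blinfun_apply \<mu>)"
  unfolding weak_star_top_eq_initial_topology by (rule continuous_map_initial_topology) simp

lemma continuous_map_into_weak_top:
  assumes "\<And>\<phi> :: 'y::real_normed_vector \<Rightarrow>\<^sub>L real. continuous_map X euclideanreal (\<lambda>x. \<phi> (g x))"
  shows "continuous_map X weak_top g"
  unfolding weak_top_eq_initial_topology
  by (rule continuous_map_into_initial_topology) (use assms in auto)

lemma continuous_map_weak_top_bounded_linear:
  assumes "bounded_linear L"
  shows "continuous_map weak_top weak_top L"
proof (rule continuous_map_into_weak_top)
  fix \<phi> :: "'b \<Rightarrow>\<^sub>L real"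
  show "continuous_map weak_top euclideanreal (\<lambda>x. \<phi> (L x))"
    by (rule continuous_map_weak_top_functional)
      (rule bounded_linear_compose[OF blinfun.bounded_linear_right assms])
qed

lemma Hausdorff_space_weak_top:
  fixes G :: "('x::real_normed_vector \<Rightarrow> real) set"
  assumes "\<And>g. g \<in> G \<Longrightarrow> bounded_linear g" and "\<And>x y. x \<noteq> y \<Longrightarrow> \<exists>g\<in>G. g x \<noteq> g y"
  shows "Hausdorff_space (weak_top :: 'x topology)"
  unfolding weak_top_eq_initial_topology
proof (rule Hausdorff_space_initial_topology)
  fix x y :: 'x assume "x \<noteq> y"
  then obtain g where g: "g \<in> G" "g x \<noteq> g y" using assms(2) by blast
  then have "g \<in> range blinfun_apply" by (intro bounded_linear_imp_mem_range_blinfun_apply assms(1))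
  with g(2) show "\<exists>f\<in>range blinfun_apply. f x \<noteq> (f y :: real)" by blast
qed

subsection \<open>Hahn-Banach in finite codimension\<close>

lemma linear_compose_mult_left: "linear f \<Longrightarrow> linear (\<lambda>x. c * f x :: real)"
  using linear_compose_scale_right[of f c] by simp

lemma linear_eq_multiple_if_kernel_subset:
  fixes f g :: "'a::real_vector \<Rightarrow> real"
  assumes f: "linear f" and g: "linear g" and M: "subspace M"
    and ker: "\<And>x. x \<in> M \<Longrightarrow> g x = 0 \<Longrightarrow> f x = 0"
  obtains d where "\<And>x. x \<in> M \<Longrightarrow> f x = d * g x"
proof (cases "\<exists>x0\<in>M. g x0 \<noteq> 0")
  case True
  then obtain x0 where x0: "x0 \<in> M" "g x0 \<noteq> 0" by blast
  have "f x = (f x0 / g x0) * g x" if "x \<in> M" for x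
  proof -
    define y where "y = x - (g x / g x0) *\<^sub>R x0"
    have "y \<in> M" unfolding y_def using M that x0(1) by (intro subspace_diff subspace_scale) auto
    moreover have "g y = 0" unfolding y_def using x0(2) g by (simp add: linear_diff linear_scale)
    ultimately have "f y = 0" by (rule ker)
    moreover have "f y = f x - (g x / g x0) * f x0" unfolding y_def using f by (simp add: linear_diff linear_scale)
    ultimately show ?thesis by simp
  qed
  then show ?thesis by (rule that)
next
  case False
  then show ?thesis using ker by (intro that[of 0]) auto
qed

lemma linear_eq_combination_if_common_kernel_subset:
  fixes g :: "'i \<Rightarrow> 'a::real_vector \<Rightarrow> real"
  assumes "finite I" "\<And>i. i \<in> I \<Longrightarrow> linear (g i)" and f: "linear f" and "subspace M"
    and "\<And>x. x \<in> M \<Longrightarrow> \<forall>i\<in>I. g i x = 0 \<Longrightarrow> f x = 0"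
  shows "\<exists>c. \<forall>x\<in>M. f x = (\<Sum>i\<in>I. c i * g i x)"
  using assms(1,2,4,5)
proof (induction I arbitrary: M rule: finite_induct)
  case empty
  then show ?case by simp
next
  case (insert j I)
  define M' where "M' = M \<inter> {x. g j x = 0}"
  have "subspace M'"
    unfolding M'_def using insert.prems(1,2) by (simp add: subspace_inter linear_subspace_kernel)
  then obtain c where c: "\<forall>x\<in>M'. f x = (\<Sum>i\<in>I. c i * g i x)"
    using insert.IH[of M'] insert.prems(1,3) unfolding M'_def by auto
  have "linear (\<lambda>x. f x - (\<Sum>i\<in>I. c i * g i x))"
    using insert.prems(1) by (intro linear_compose_sub f linear_compose_sum ballI linear_compose_mult_left) auto
  then obtain d where d: "\<And>x. x \<in> M \<Longrightarrow> f x - (\<Sum>i\<in>I. c i * g i x) = d * g j x"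
    by (rule linear_eq_multiple_if_kernel_subset) (use insert.prems c in \<open>auto simp: M'_def\<close>)
  have "f x = (\<Sum>i\<in>insert j I. (c(j := d)) i * g i x)" if "x \<in> M" for x
  proof -
    have "(\<Sum>i\<in>I. (c(j := d)) i * g i x) = (\<Sum>i\<in>I. c i * g i x)"
      using insert.hyps(2) by (intro sum.cong) auto
    then show ?thesis using d[OF that] insert.hyps by simp
  qed
  then show ?case by blast
qed

lemma functional_extension_bound_from_unit_scalars:
  fixes h :: "'a::real_normed_vector \<Rightarrow> real"
  assumes L: "subspace L" and h: "linear h" and hb: "\<And>y. y \<in> L \<Longrightarrow> \<bar>h y\<bar> \<le> e * norm y"
    and upper: "\<And>y. y \<in> L \<Longrightarrow> h y + t \<le> e * norm (y + x0)"
    and lower: "\<And>y. y \<in> L \<Longrightarrow> h y - t \<le> e * norm (y - x0)"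
    and y: "y \<in> L"
  shows "\<bar>h y + s * t\<bar> \<le> e * norm (y + s *\<^sub>R x0)"
proof -
  have one_sided: "h y + s * t \<le> e * norm (y + s *\<^sub>R x0)" if y: "y \<in> L" for y s
  proof -
    consider "s = 0" | "s > 0" | "s < 0" by linarith
    then show ?thesis
    proof cases
      case 1
      then show ?thesis using hb[OF y] by simp
    next
      case 2
      define w where "w = y /\<^sub>R s"
      have "w \<in> L" unfolding w_def using L y by (rule subspace_scale)
      have "y = s *\<^sub>R w" using 2 by (simp add: w_def)
      then have "h y + s * t = s * (h w + t)" "norm (y + s *\<^sub>R x0) = s * norm (w + x0)"
        using h 2 by (simp_all add: linear_scale algebra_simps flip: scaleR_add_right)
      then show ?thesis using upper[OF \<open>w \<in> L\<close>] 2 by (simp add: mult_left_mono mult.left_commute)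
    next
      case 3
      define r where "r = - s"
      have r: "r > 0" "s = - r" using 3 by (simp_all add: r_def)
      define w where "w = y /\<^sub>R r"
      have "w \<in> L" unfolding w_def using L y by (rule subspace_scale)
      have "y = r *\<^sub>R w" using r by (simp add: w_def)
      then have "h y + s * t = r * (h w - t)" "norm (y + s *\<^sub>R x0) = r * norm (w - x0)"
        using h r by (simp_all add: linear_scale algebra_simps flip: scaleR_diff_right)
      then show ?thesis using lower[OF \<open>w \<in> L\<close>] r by (simp add: mult_left_mono mult.left_commute)
    qed
  qed
  have "- (h y + s * t) = h (- y) + (- s) * t" using h by (simp add: linear_neg)
  also have "\<dots> \<le> e * norm (- y + (- s) *\<^sub>R x0)" using L y by (intro one_sided subspace_neg)
  also have "\<dots> = e * norm (y + s *\<^sub>R x0)" by (simp flip: norm_minus_cancel[of "y + s *\<^sub>R x0"])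
  finally show ?thesis using one_sided[OF y] by (simp add: abs_le_iff)
qed

lemma functional_extension_one_dimension:
  fixes h :: "'a::real_normed_vector \<Rightarrow> real"
  assumes e: "e \<ge> 0" and L: "subspace L" and h: "linear h"
    and hb: "\<And>y. y \<in> L \<Longrightarrow> \<bar>h y\<bar> \<le> e * norm y"
  obtains t where "\<And>y s. y \<in> L \<Longrightarrow> \<bar>h y + s * t\<bar> \<le> e * norm (y + s *\<^sub>R x0)"
proof -
  have sum_le: "h y + h z \<le> e * norm (y - x0) + e * norm (z + x0)" if "y \<in> L" "z \<in> L" for y z
  proof -
    have "h y + h z = h (y + z)" using h by (simp add: linear_add)
    also have "\<dots> \<le> e * norm (y + z)" using hb[of "y + z"] L that by (simp add: subspace_add)
    also have "\<dots> \<le> e * (norm (y - x0) + norm (z + x0))"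
      using norm_triangle_ineq[of "y - x0" "z + x0"] e by (intro mult_left_mono) simp_all
    finally show ?thesis by (simp add: distrib_left)
  qed
  define t where "t = (SUP y\<in>L. h y - e * norm (y - x0))"
  have L0: "0 \<in> L" using L by (rule subspace_0)
  have bdd: "bdd_above ((\<lambda>y. h y - e * norm (y - x0)) ` L)"
    using sum_le[OF _ L0] by (intro bdd_aboveI2[where M="e * norm x0 - h 0"]) (simp add: algebra_simps)
  have "h y - t \<le> e * norm (y - x0)" if "y \<in> L" for y
    using cSUP_upper[OF that bdd] unfolding t_def by simp
  moreover have "h z + t \<le> e * norm (z + x0)" if "z \<in> L" for z
  proof -
    have "t \<le> e * norm (z + x0) - h z"
      unfolding t_def using L0 sum_le[OF _ that] by (intro cSUP_least) (auto simp: algebra_simps)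
    then show ?thesis by simp
  qed
  ultimately show ?thesis
    using functional_extension_bound_from_unit_scalars[OF L h hb] that by blast
qed

lemma functional_extension_across_kernel:
  fixes g h :: "'a::real_normed_vector \<Rightarrow> real"
  assumes e: "e \<ge> 0" and M: "subspace M" and g: "linear g" and h: "linear h"
    and hb: "\<And>x. x \<in> M \<Longrightarrow> g x = 0 \<Longrightarrow> \<bar>h x\<bar> \<le> e * norm x"
  obtains h' where "linear h'" "\<And>x. x \<in> M \<Longrightarrow> \<bar>h' x\<bar> \<le> e * norm x"
    "\<And>x. x \<in> M \<Longrightarrow> g x = 0 \<Longrightarrow> h' x = h x"
proof (cases "\<exists>x1\<in>M. g x1 \<noteq> 0")
  case True
  then obtain x0 where x0: "x0 \<in> M" "g x0 \<noteq> 0" by blast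
  define x1 where "x1 = x0 /\<^sub>R g x0"
  have "x1 \<in> M" unfolding x1_def using M x0(1) by (rule subspace_scale)
  have "g x1 = 1" unfolding x1_def using x0(2) g by (simp add: linear_scale)
  define L where "L = M \<inter> {x. g x = 0}"
  have "subspace L" unfolding L_def using M g by (simp add: subspace_inter linear_subspace_kernel)
  then obtain t where t: "\<And>y s. y \<in> L \<Longrightarrow> \<bar>h y + s * t\<bar> \<le> e * norm (y + s *\<^sub>R x1)"
    using functional_extension_one_dimension[OF e _ h, of L x1] hb unfolding L_def by blast
  define p where "p x = x - g x *\<^sub>R x1" for x
  define h' where "h' x = h (p x) + t * g x" for x
  have "linear p"
    unfolding linear_iff p_def using g by (simp add: linear_add linear_scale algebra_simps)
  have proj: "p x \<in> L" if "x \<in> M" for x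
    unfolding L_def p_def using M that \<open>x1 \<in> M\<close> \<open>g x1 = 1\<close> g
    by (auto simp: linear_diff linear_scale intro: subspace_diff subspace_scale)
  have "linear h'"
    unfolding h'_def[abs_def]
    by (intro linear_compose_add linear_compose_mult_left g linear_compose[OF \<open>linear p\<close> h, unfolded o_def])
  moreover have "\<bar>h' x\<bar> \<le> e * norm x" if "x \<in> M" for x
    using t[OF proj[OF that], of "g x"] by (simp add: h'_def p_def mult.commute)
  moreover have "h' x = h x" if "g x = 0" for x
    using that by (simp add: h'_def p_def)
  ultimately show ?thesis by (rule that)
next
  case False
  then show ?thesis using h hb by (intro that[of h]) auto
qed

lemma functional_extension_finite_codimension:
  fixes g :: "'i \<Rightarrow> 'a::real_normed_vector \<Rightarrow> real"
  assumes "finite I" "\<And>i. i \<in> I \<Longrightarrow> linear (g i)" and e: "e \<ge> 0" and "subspace M" and f: "linear f"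
    and "\<And>x. x \<in> M \<Longrightarrow> \<forall>i\<in>I. g i x = 0 \<Longrightarrow> \<bar>f x\<bar> \<le> e * norm x"
  shows "\<exists>h. linear h \<and> (\<forall>x\<in>M. \<bar>h x\<bar> \<le> e * norm x) \<and> (\<forall>x\<in>M. (\<forall>i\<in>I. g i x = 0) \<longrightarrow> h x = f x)"
  using assms(1,2,4,6)
proof (induction I arbitrary: M rule: finite_induct)
  case empty
  then show ?case using f by auto
next
  case (insert j I)
  define M' where "M' = M \<inter> {x. g j x = 0}"
  have "subspace M'"
    unfolding M'_def using insert.prems(1,2) by (simp add: subspace_inter linear_subspace_kernel)
  then obtain h' where h': "linear h'" "\<forall>x\<in>M'. \<bar>h' x\<bar> \<le> e * norm x"
      "\<forall>x\<in>M'. (\<forall>i\<in>I. g i x = 0) \<longrightarrow> h' x = f x"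
    using insert.IH[of M'] insert.prems(1,3) unfolding M'_def by auto
  obtain h where "linear h" "\<And>x. x \<in> M \<Longrightarrow> \<bar>h x\<bar> \<le> e * norm x"
      "\<And>x. x \<in> M \<Longrightarrow> g j x = 0 \<Longrightarrow> h x = h' x"
    by (rule functional_extension_across_kernel[OF e insert.prems(2) _ h'(1)])
      (use insert.prems(1) h'(2) in \<open>auto simp: M'_def\<close>)
  then show ?case using h'(3) unfolding M'_def by auto
qed

lemma functional_near_span_if_bounded_on_common_kernel:
  fixes \<psi> :: "'a::real_normed_vector \<Rightarrow>\<^sub>L real" and F :: "('a \<Rightarrow>\<^sub>L real) set"
  assumes "finite F" "e \<ge> 0" "\<And>x. \<forall>\<mu>\<in>F. \<mu> x = 0 \<Longrightarrow> \<bar>\<psi> x\<bar> \<le> e * norm x"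
  obtains c where "norm (\<psi> - (\<Sum>\<mu>\<in>F. c \<mu> *\<^sub>R \<mu>)) \<le> e"
proof -
  have lin: "linear (blinfun_apply \<mu>)" for \<mu> :: "'a \<Rightarrow>\<^sub>L real"
    by (rule bounded_linear.linear[OF blinfun.bounded_linear_right])
  obtain h where h: "linear h" "\<forall>x. \<bar>h x\<bar> \<le> e * norm x" "\<forall>x. (\<forall>\<mu>\<in>F. \<mu> x = 0) \<longrightarrow> h x = \<psi> x"
    using functional_extension_finite_codimension[where g = blinfun_apply and f = "blinfun_apply \<psi>",
          OF assms(1) lin assms(2) subspace_UNIV lin] assms(3)
    by auto
  obtain c where c: "\<forall>x\<in>UNIV. \<psi> x - h x = (\<Sum>\<mu>\<in>F. c \<mu> * blinfun_apply \<mu> x)"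
    using linear_eq_combination_if_common_kernel_subset[where g = blinfun_apply, OF assms(1) lin linear_compose_sub[OF lin[of \<psi>] h(1)]
        subspace_UNIV] h(3) by auto
  have "norm (\<psi> - (\<Sum>\<mu>\<in>F. c \<mu> *\<^sub>R \<mu>)) \<le> e"
  proof (rule norm_blinfun_bound[OF assms(2)])
    fix x
    have "(\<psi> - (\<Sum>\<mu>\<in>F. c \<mu> *\<^sub>R \<mu>)) x = h x"
      using c[rule_format, of x] by (simp add: blinfun.diff_left blinfun.sum_left blinfun.scaleR_left)
    then show "norm ((\<psi> - (\<Sum>\<mu>\<in>F. c \<mu> *\<^sub>R \<mu>)) x) \<le> e * norm x" using h(2) by simp
  qed
  then show ?thesis by (rule that)
qed

lemma mem_closed_subspace_if_controlled_on_unit_ball: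
  fixes P :: "('a::real_normed_vector \<Rightarrow>\<^sub>L real) set" and \<psi> :: "'a \<Rightarrow>\<^sub>L real"
  assumes "subspace P" "closed P"
    and ctrl: "\<And>e. e > 0 \<Longrightarrow> \<exists>F d. finite F \<and> F \<subseteq> P \<and> d > 0 \<and>
                 (\<forall>a. norm a \<le> 1 \<longrightarrow> (\<forall>\<mu>\<in>F. \<bar>\<mu> a\<bar> < d) \<longrightarrow> \<bar>\<psi> a\<bar> < e)"
  shows "\<psi> \<in> P"
proof -
  have "\<exists>\<nu>\<in>P. dist \<nu> \<psi> < e" if "e > 0" for e
  proof -
    obtain F d where F: "finite F" "F \<subseteq> P" "d > 0"
      and Fd: "\<forall>a. norm a \<le> 1 \<longrightarrow> (\<forall>\<mu>\<in>F. \<bar>\<mu> a\<bar> < d) \<longrightarrow> \<bar>\<psi> a\<bar> < e / 2"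
      using ctrl[of "e / 2"] \<open>e > 0\<close> by auto
    have "\<bar>\<psi> x\<bar> \<le> e / 2 * norm x" if x: "\<forall>\<mu>\<in>F. \<mu> x = 0" for x
    proof (cases "x = 0")
      case False
      define a where "a = x /\<^sub>R norm x"
      have "norm a \<le> 1" "\<forall>\<mu>\<in>F. \<bar>\<mu> a\<bar> < d"
        using False x F(3) by (simp_all add: a_def blinfun.scaleR_right)
      then have "\<bar>\<psi> a\<bar> \<le> e / 2" using Fd by fastforce
      then have "norm x * \<bar>\<psi> a\<bar> \<le> norm x * (e / 2)" by (rule mult_left_mono) simp
      moreover have "\<bar>\<psi> x\<bar> = norm x * \<bar>\<psi> a\<bar>"
        using False by (simp add: a_def blinfun.scaleR_right abs_mult)
      ultimately show ?thesis by (simp add: mult.commute)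
    qed simp
    then obtain c where c: "norm (\<psi> - (\<Sum>\<mu>\<in>F. c \<mu> *\<^sub>R \<mu>)) \<le> e / 2"
      using functional_near_span_if_bounded_on_common_kernel[OF F(1), of "e / 2"] \<open>e > 0\<close> by auto
    have "(\<Sum>\<mu>\<in>F. c \<mu> *\<^sub>R \<mu>) \<in> P" using assms(1) F(2) by (intro subspace_sum subspace_scale) auto
    moreover have "dist (\<Sum>\<mu>\<in>F. c \<mu> *\<^sub>R \<mu>) \<psi> < e"
      using c \<open>e > 0\<close> by (simp add: dist_norm norm_minus_commute)
    ultimately show ?thesis by blast
  qed
  then show ?thesis using closed_approachable[OF assms(2)] by blast
qed

subsection \<open>Banach-Alaoglu for the predual\<close>

lemma dual_banach_algebraD:
  assumes "dual_banach_algebra P"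
  shows "subspace P" "closed P" "\<And>\<mu> a. \<mu> \<in> P \<Longrightarrow> lact a \<mu> \<in> P" "\<And>\<mu> a. \<mu> \<in> P \<Longrightarrow> ract \<mu> a \<in> P"
  using assms unfolding dual_banach_algebra_def by auto

lemma dual_banach_algebra_eq_0:
  fixes P :: "('a::{real_normed_algebra,banach} \<Rightarrow>\<^sub>L real) set"
  assumes "dual_banach_algebra P" "\<forall>\<mu>\<in>P. blinfun_apply \<mu> a = 0"
  shows "a = 0"
proof -
  obtain c where c: "\<forall>a. norm a \<le> c * Sup {\<bar>blinfun_apply \<mu> a\<bar> | \<mu>. \<mu> \<in> P \<and> norm \<mu> \<le> 1}"
    using assms(1) unfolding dual_banach_algebra_def by blast
  have "0 \<in> P" using dual_banach_algebraD(1)[OF assms(1)] by (rule subspace_0)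
  then have "{\<bar>blinfun_apply \<mu> a\<bar> | \<mu>. \<mu> \<in> P \<and> norm \<mu> \<le> 1} = {0}" using assms(2) by force
  then show ?thesis using c[rule_format, of a] by simp
qed

definition contractive_functionals :: "'v::real_normed_vector set \<Rightarrow> ('v \<Rightarrow> real) set" where
  "contractive_functionals P =
     {\<phi> \<in> (\<Pi>\<^sub>E \<mu>\<in>P. {-norm \<mu>..norm \<mu>}). \<forall>\<mu>\<in>P. \<forall>\<nu>\<in>P. \<forall>c. \<phi> (\<mu> + c *\<^sub>R \<nu>) = \<phi> \<mu> + c * \<phi> \<nu>}"

lemma compactin_contractive_functionals:
  assumes "subspace P"
  shows "compactin (product_topology (\<lambda>_. euclideanreal) P) (contractive_functionals P)"
proof -
  let ?X = "product_topology (\<lambda>_. euclideanreal) P"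
  define lin where "lin = (\<lambda>(\<mu>, \<nu>, c). {\<phi> \<in> topspace ?X. \<phi> (\<mu> + c *\<^sub>R \<nu>) = \<phi> \<mu> + c * \<phi> \<nu>})"
  have closed: "closedin ?X (\<Inter> (lin ` (P \<times> P \<times> UNIV)))"
  proof (rule closedin_Inter)
    show "lin ` (P \<times> P \<times> UNIV) \<noteq> {}" using subspace_0[OF assms] by blast
    fix S assume "S \<in> lin ` (P \<times> P \<times> UNIV)"
    then obtain \<mu> \<nu> c where \<mu>\<nu>: "\<mu> \<in> P" "\<nu> \<in> P" and S: "S = lin (\<mu>, \<nu>, c)" by auto
    have "\<mu> + c *\<^sub>R \<nu> \<in> P" using assms \<mu>\<nu> by (intro subspace_add subspace_scale)
    then have "closedin ?X {\<phi> \<in> topspace ?X. \<phi> (\<mu> + c *\<^sub>R \<nu>) = \<phi> \<mu> + c * \<phi> \<nu>}"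
      by (intro closedin_continuous_maps_eq[OF Hausdorff_space_euclidean] continuous_map_add
          continuous_map_real_mult_left continuous_map_product_projection \<mu>\<nu>)
    then show "closedin ?X S" unfolding S lin_def by simp
  qed
  have "compactin ?X (\<Pi>\<^sub>E \<mu>\<in>P. {-norm \<mu>..norm \<mu>})" by (simp add: compactin_PiE)
  with closed have "compactin ?X (\<Inter> (lin ` (P \<times> P \<times> UNIV)) \<inter> (\<Pi>\<^sub>E \<mu>\<in>P. {-norm \<mu>..norm \<mu>}))"
    by (rule closed_Int_compactin)
  moreover have "contractive_functionals P = \<Inter> (lin ` (P \<times> P \<times> UNIV)) \<inter> (\<Pi>\<^sub>E \<mu>\<in>P. {-norm \<mu>..norm \<mu>})"
    unfolding contractive_functionals_def lin_def by (auto simp: PiE_iff extensional_def)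
  ultimately show ?thesis by simp
qed

definition dual_unit_ball :: "('a::real_normed_vector \<Rightarrow>\<^sub>L real) set \<Rightarrow> 'a set" where
  "dual_unit_ball P = {a. \<forall>\<mu>\<in>P. \<bar>blinfun_apply \<mu> a\<bar> \<le> norm \<mu>}"

lemma cball_subset_dual_unit_ball: "cball 0 1 \<subseteq> dual_unit_ball (P :: ('a::real_normed_vector \<Rightarrow>\<^sub>L real) set)"
proof
  fix a :: 'a assume "a \<in> cball 0 1"
  then have "\<bar>blinfun_apply \<mu> a\<bar> \<le> norm \<mu>" for \<mu>
    using norm_blinfun[of \<mu> a] mult_left_mono[of "norm a" 1 "norm \<mu>"] by simp
  then show "a \<in> dual_unit_ball P" by (simp add: dual_unit_ball_def)
qed

lemma contractive_functional_eq_evaluation: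
  fixes P :: "('a::{real_normed_algebra,banach} \<Rightarrow>\<^sub>L real) set"
  assumes dba: "dual_banach_algebra P" and \<phi>: "\<phi> \<in> contractive_functionals P"
  shows "\<exists>a. \<forall>\<mu>\<in>P. \<phi> \<mu> = blinfun_apply \<mu> a"
proof -
  have P0: "0 \<in> P" using dual_banach_algebraD(1)[OF dba] by (rule subspace_0)
  have lin: "\<phi> (\<mu> + c *\<^sub>R \<nu>) = \<phi> \<mu> + c * \<phi> \<nu>" if "\<mu> \<in> P" "\<nu> \<in> P" for \<mu> \<nu> c
    using \<phi> that by (simp add: contractive_functionals_def)
  have "\<phi> 0 = 0" using lin[OF P0 P0, of 1] by simp
  then have "(\<forall>\<mu>\<in>P. \<forall>\<nu>\<in>P. \<phi> (\<mu> + \<nu>) = \<phi> \<mu> + \<phi> \<nu>) \<and> (\<forall>\<mu>\<in>P. \<forall>c. \<phi> (c *\<^sub>R \<mu>) = c * \<phi> \<mu>)"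
    using lin[of _ _ 1] lin[OF P0] by simp
  moreover have "\<forall>\<mu>\<in>P. \<bar>\<phi> \<mu>\<bar> \<le> 1 * norm \<mu>"
    using \<phi> by (auto simp: contractive_functionals_def PiE_iff abs_le_iff)
  ultimately show ?thesis using dba unfolding dual_banach_algebra_def by blast
qed

lemma evaluation_mem_contractive_functionals:
  assumes "subspace P" "a \<in> dual_unit_ball P"
  shows "restrict (\<lambda>\<mu>. blinfun_apply \<mu> a) P \<in> contractive_functionals P"
  using assms unfolding contractive_functionals_def dual_unit_ball_def
  by (auto simp: PiE_iff abs_le_iff blinfun.add_left blinfun.scaleR_left subspace_add subspace_scale)

lemma compactin_dual_unit_ball:
  fixes P :: "('a::{real_normed_algebra,banach} \<Rightarrow>\<^sub>L real) set"
  assumes dba: "dual_banach_algebra P"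
  shows "compactin (weak_star_top P) (dual_unit_ball P)"
proof -
  let ?X = "product_topology (\<lambda>_. euclideanreal) P"
  let ?C = "contractive_functionals P"
  have P: "subspace P" using dual_banach_algebraD(1)[OF dba] .
  define g where "g \<phi> = (SOME a. \<forall>\<mu>\<in>P. \<phi> \<mu> = blinfun_apply \<mu> a)" for \<phi>
  have g: "\<phi> \<mu> = blinfun_apply \<mu> (g \<phi>)" if "\<phi> \<in> ?C" "\<mu> \<in> P" for \<phi> \<mu>
    using someI_ex[OF contractive_functional_eq_evaluation[OF dba that(1)], unfolded g_def[symmetric]] that(2)
    by blast
  have "continuous_map (subtopology ?X ?C) (weak_star_top P) g"
    unfolding weak_star_top_eq_initial_topology
  proof (rule continuous_map_into_initial_topology)
    show "blinfun_apply ` P \<noteq> {}" using subspace_0[OF P] by blast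
    fix f assume "f \<in> blinfun_apply ` P"
    then obtain \<mu> where \<mu>: "\<mu> \<in> P" "f = blinfun_apply \<mu>" by blast
    have "continuous_map (subtopology ?X ?C) euclideanreal (\<lambda>\<phi>. \<phi> \<mu>)"
      by (rule continuous_map_from_subtopology[OF continuous_map_product_projection[OF \<mu>(1)]])
    then show "continuous_map (subtopology ?X ?C) euclideanreal (\<lambda>\<phi>. f (g \<phi>))"
      by (rule continuous_map_eq) (auto simp: \<mu>(2) intro: g[OF _ \<mu>(1)])
  qed
  moreover have "compactin (subtopology ?X ?C) ?C"
    using compactin_contractive_functionals[OF P] by (simp add: compactin_subtopology)
  ultimately have "compactin (weak_star_top P) (g ` ?C)" by (rule image_compactin[rotated])
  moreover have "g ` ?C = dual_unit_ball P"
  proof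
    show "g ` ?C \<subseteq> dual_unit_ball P"
    proof
      fix a assume "a \<in> g ` ?C"
      then obtain \<phi> where \<phi>: "\<phi> \<in> ?C" "a = g \<phi>" by blast
      then show "a \<in> dual_unit_ball P"
        using g[OF \<phi>(1)] by (auto simp: contractive_functionals_def dual_unit_ball_def PiE_iff abs_le_iff)
    qed
  next
    show "dual_unit_ball P \<subseteq> g ` ?C"
    proof
      fix a assume a: "a \<in> dual_unit_ball P"
      define \<phi> where "\<phi> = restrict (\<lambda>\<mu>. blinfun_apply \<mu> a) P"
      have "\<phi> \<in> ?C" unfolding \<phi>_def using P a by (rule evaluation_mem_contractive_functionals)
      have "\<forall>\<mu>\<in>P. blinfun_apply \<mu> (g \<phi> - a) = 0"
        using g[OF \<open>\<phi> \<in> ?C\<close>] by (simp add: \<phi>_def blinfun.diff_right)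
      then have "g \<phi> - a = 0" by (rule dual_banach_algebra_eq_0[OF dba])
      with \<open>\<phi> \<in> ?C\<close> show "a \<in> g ` ?C" by force
    qed
  qed
  ultimately show ?thesis by simp
qed

subsection \<open>Weak*-weak continuity and weak compactness\<close>

lemma weak_star_continuous_on_unit_ball_imp_mem:
  fixes P :: "('a::real_normed_vector \<Rightarrow>\<^sub>L real) set"
  assumes P: "subspace P" "closed P" and f: "bounded_linear f"
    and cont: "continuous_map (subtopology (weak_star_top P) (cball 0 1)) euclideanreal f"
  shows "Blinfun f \<in> P"
proof (rule mem_closed_subspace_if_controlled_on_unit_ball[OF P])
  fix e :: real assume "e > 0"
  have "P \<noteq> {}" using subspace_0[OF P(1)] by blast
  have "openin (subtopology (weak_star_top P) (cball 0 1)) {a \<in> cball 0 1. \<bar>f a\<bar> < e}"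
    using openin_continuous_map_preimage[OF cont, of "ball 0 e"]
    by (simp add: topspace_weak_star_top[OF \<open>P \<noteq> {}\<close>])
  then obtain V where V: "openin (weak_star_top P) V" "{a \<in> cball 0 1. \<bar>f a\<bar> < e} = V \<inter> cball 0 1"
    unfolding openin_subtopology by blast
  have "f 0 = 0" using f by (simp add: linear_0 bounded_linear.linear)
  then have "0 \<in> {a \<in> cball 0 1. \<bar>f a\<bar> < e}" using \<open>e > 0\<close> by simp
  then have "0 \<in> V" using V(2) by blast
  have "\<exists>G d. finite G \<and> G \<subseteq> blinfun_apply ` P \<and> d > 0 \<and> (\<forall>y. (\<forall>g\<in>G. \<bar>g y - g 0\<bar> < d) \<longrightarrow> y \<in> V)"
    by (rule openin_initial_topology_basic_nbhd[OF V(1)[unfolded weak_star_top_eq_initial_topology] \<open>0 \<in> V\<close>])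
  then obtain G d where G: "finite G" "G \<subseteq> blinfun_apply ` P" "d > 0"
      "\<forall>y. (\<forall>g\<in>G. \<bar>g y - g 0\<bar> < d) \<longrightarrow> y \<in> V"
    by blast
  obtain F where F: "F \<subseteq> P" "finite F" "G = blinfun_apply ` F"
    using finite_subset_image[OF G(1,2)] by blast
  have "\<forall>a. norm a \<le> 1 \<longrightarrow> (\<forall>\<mu>\<in>F. \<bar>\<mu> a\<bar> < d) \<longrightarrow> \<bar>Blinfun f a\<bar> < e"
    using G(4) V(2) unfolding F(3) bounded_linear_Blinfun_apply[OF f] by auto
  then show "\<exists>F d. finite F \<and> F \<subseteq> P \<and> d > 0 \<and>
      (\<forall>a. norm a \<le> 1 \<longrightarrow> (\<forall>\<mu>\<in>F. \<bar>\<mu> a\<bar> < d) \<longrightarrow> \<bar>Blinfun f a\<bar> < e)"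
    using F(1,2) G(3) by blast
qed

lemma weak_star_weak_continuous_imp_functional_mem:
  fixes P :: "('a::real_normed_vector \<Rightarrow>\<^sub>L real) set" and S :: "'a \<Rightarrow> 'e::real_normed_vector"
  assumes P: "subspace P" "closed P" and S: "bounded_linear S" and \<phi>: "bounded_linear \<phi>"
    and cont: "continuous_map (weak_star_top P) weak_top S"
  shows "Blinfun (\<lambda>a. \<phi> (S a)) \<in> P"
proof (rule weak_star_continuous_on_unit_ball_imp_mem[OF P])
  show "bounded_linear (\<lambda>a. \<phi> (S a))" using bounded_linear_compose[OF \<phi> S] .
  have "continuous_map (weak_star_top P) euclideanreal (\<phi> \<circ> S)"
    by (rule continuous_map_compose[OF cont continuous_map_weak_top_functional[OF \<phi>]])
  then show "continuous_map (subtopology (weak_star_top P) (cball 0 1)) euclideanreal (\<lambda>a. \<phi> (S a))"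
    by (simp add: continuous_map_from_subtopology o_def)
qed

lemma weak_star_weak_continuous_imp_weakly_compact:
  fixes P :: "('a::{real_normed_algebra,banach} \<Rightarrow>\<^sub>L real) set" and S :: "'a \<Rightarrow> 'e::real_normed_vector"
  assumes "dual_banach_algebra P" "Hausdorff_space (weak_top :: 'e topology)"
    and cont: "continuous_map (weak_star_top P) weak_top S"
  shows "weakly_compact_map S"
proof -
  have K: "compactin weak_top (S ` dual_unit_ball P)"
    by (rule image_compactin[OF compactin_dual_unit_ball[OF assms(1)] cont])
  then have "closedin weak_top (S ` dual_unit_ball P)" by (rule compactin_imp_closedin[OF assms(2)])
  moreover have "S ` cball 0 1 \<subseteq> S ` dual_unit_ball P" using cball_subset_dual_unit_ball by blast
  ultimately have "weak_top closure_of (S ` cball 0 1) \<subseteq> S ` dual_unit_ball P"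
    by (rule closure_of_minimal[rotated])
  then show ?thesis
    unfolding weakly_compact_map_def by (rule closed_compactin[OF K _ closedin_closure_of])
qed

lemma weak_star_weak_continuous_if_continuous_on_unit_ball:
  fixes P :: "('a::real_normed_vector \<Rightarrow>\<^sub>L real) set" and S :: "'a \<Rightarrow> 'e::real_normed_vector"
  assumes P: "subspace P" "closed P" and S: "bounded_linear S"
    and cont: "continuous_map (subtopology (weak_star_top P) (cball 0 1)) weak_top S"
  shows "continuous_map (weak_star_top P) weak_top S"
proof (rule continuous_map_into_weak_top)
  fix \<phi> :: "'e \<Rightarrow>\<^sub>L real"
  have bl: "bounded_linear (\<lambda>a. \<phi> (S a))" using bounded_linear_compose[OF blinfun.bounded_linear_right S] .
  have "continuous_map (subtopology (weak_star_top P) (cball 0 1)) euclideanreal (\<lambda>a. \<phi> (S a))"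
    using continuous_map_compose[OF cont continuous_map_weak_top_functional[OF blinfun.bounded_linear_right]]
    by (simp add: o_def)
  then have "Blinfun (\<lambda>a. \<phi> (S a)) \<in> P" by (rule weak_star_continuous_on_unit_ball_imp_mem[OF P bl])
  from continuous_map_weak_star_top_functional[OF this]
  show "continuous_map (weak_star_top P) euclideanreal (\<lambda>a. \<phi> (S a))"
    unfolding bounded_linear_Blinfun_apply[OF bl] .
qed

lemma weakly_compact_imp_weak_star_weak_continuous:
  fixes P :: "('a::real_normed_vector \<Rightarrow>\<^sub>L real) set" and S :: "'a \<Rightarrow> 'e::real_normed_vector"
    and G :: "('e \<Rightarrow> real) set"
  assumes P: "subspace P" "closed P" and S: "bounded_linear S" "weakly_compact_map S"
    and G: "G \<noteq> {}" "\<And>g. g \<in> G \<Longrightarrow> bounded_linear g" "\<And>x y. x \<noteq> y \<Longrightarrow> \<exists>g\<in>G. g x \<noteq> g y"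
    and GS: "\<And>g. g \<in> G \<Longrightarrow> Blinfun (\<lambda>a. g (S a)) \<in> P"
  shows "continuous_map (weak_star_top P) weak_top S"
proof (rule weak_star_weak_continuous_if_continuous_on_unit_ball[OF P S(1)])
  define K where "K = weak_top closure_of (S ` cball 0 1)"
  have "compactin weak_top K" using S(2) unfolding weakly_compact_map_def K_def .
  have "S ` cball 0 1 \<subseteq> K" unfolding K_def by (rule closure_of_subset) simp
  have "P \<noteq> {}" using subspace_0[OF P(1)] by blast
  have S_G: "continuous_map (weak_star_top P) (initial_topology G) S"
  proof (rule continuous_map_into_initial_topology[OF G(1)])
    fix g assume "g \<in> G"
    have "blinfun_apply (Blinfun (\<lambda>a. g (S a))) = (\<lambda>a. g (S a))"
      using bounded_linear_compose[OF G(2)[OF \<open>g \<in> G\<close>] S(1)] by (rule bounded_linear_Blinfun_apply)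
    then show "continuous_map (weak_star_top P) euclideanreal (\<lambda>a. g (S a))"
      using continuous_map_weak_star_top_functional[OF GS[OF \<open>g \<in> G\<close>]] by simp
  qed
  \<comment> \<open>on the weakly compact set \<open>K\<close> the coarser Hausdorff topology induced by \<open>G\<close> is the weak topology\<close>
  have id_cont: "continuous_map (subtopology (initial_topology G) K) (subtopology weak_top K) id"
  proof (rule continuous_inverse_map)
    show "compact_space (subtopology weak_top K)"
      using \<open>compactin weak_top K\<close> by (rule compact_space_subtopology)
    show "Hausdorff_space (initial_topology G)"
      using G(3) by (rule Hausdorff_space_initial_topology)
    show "continuous_map (subtopology weak_top K) (initial_topology G) id"
      by (rule continuous_map_from_subtopology, rule continuous_map_into_initial_topology[OF G(1)])
        (simp add: continuous_map_weak_top_functional G(2))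
  qed (auto simp: topspace_initial_topology[OF G(1)])
  have "continuous_map (subtopology (weak_star_top P) (cball 0 1)) (subtopology (initial_topology G) K) S"
    using continuous_map_from_subtopology[OF S_G] \<open>S ` cball 0 1 \<subseteq> K\<close>
    by (auto simp: continuous_map_in_subtopology topspace_weak_star_top[OF \<open>P \<noteq> {}\<close>])
  then have "continuous_map (subtopology (weak_star_top P) (cball 0 1)) (subtopology weak_top K) (id \<circ> S)"
    using id_cont by (rule continuous_map_compose)
  then show "continuous_map (subtopology (weak_star_top P) (cball 0 1)) weak_top S"
    by (simp add: continuous_map_in_subtopology)
qed

subsection \<open>The module actions on \<open>B(A, A')\<close>\<close>

lemma lact_eq_blinfun_compose: "lact a \<mu> = \<mu> o\<^sub>L blinfun_mult_left a"
proof -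
  have "(\<lambda>b. \<mu> (b * a)) = blinfun_apply (\<mu> o\<^sub>L blinfun_mult_left a)" by auto
  then show ?thesis unfolding lact_def by (simp only: blinfun_apply_inverse)
qed

lemma ract_eq_blinfun_compose: "ract \<mu> a = \<mu> o\<^sub>L blinfun_mult_right a"
proof -
  have "(\<lambda>b. \<mu> (a * b)) = blinfun_apply (\<mu> o\<^sub>L blinfun_mult_right a)" by auto
  then show ?thesis unfolding ract_def by (simp only: blinfun_apply_inverse)
qed

lemma blact_eq_blinfun_compose: "blact a T = T o\<^sub>L blinfun_mult_left a"
proof -
  have "(\<lambda>c. T (c * a)) = blinfun_apply (T o\<^sub>L blinfun_mult_left a)" by auto
  then show ?thesis unfolding blact_def by (simp only: blinfun_apply_inverse)
qed

lemma bract_apply: "blinfun_apply (bract T a) c = blinfun_apply T c o\<^sub>L blinfun_mult_right a"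
proof -
  have "bounded_linear (\<lambda>c. blinfun_apply T c o\<^sub>L blinfun_mult_right a)"
    by (rule bounded_linear_compose[OF bounded_bilinear.bounded_linear_left[OF bounded_bilinear_blinfun_compose]
          blinfun.bounded_linear_right])
  then show ?thesis unfolding bract_def ract_eq_blinfun_compose by (simp add: bounded_linear_Blinfun_apply)
qed

lemma bounded_linear_blact: "bounded_linear (\<lambda>a. blact a T)"
  unfolding blact_eq_blinfun_compose
  by (rule bounded_linear_compose[OF bounded_bilinear.bounded_linear_right[OF bounded_bilinear_blinfun_compose]
        bounded_linear_blinfun_mult_left])

lemma bounded_linear_bract: "bounded_linear (\<lambda>a. bract T a)"
proof -
  have "bounded_bilinear (\<lambda>c a. blinfun_apply T c o\<^sub>L blinfun_mult_right a)"
    by (rule bounded_bilinear.comp[OF bounded_bilinear_blinfun_compose blinfun.bounded_linear_right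
          bounded_linear_blinfun_mult_right])
  then have "bounded_bilinear (\<lambda>a c. blinfun_apply (bract T a) c)"
    unfolding bract_apply by (rule bounded_bilinear.flip)
  then show ?thesis by (simp add: transfer_bounded_bilinear_bounded_linearI)
qed

lemma blact_apply_apply: "blinfun_apply (blinfun_apply (blact a T) b) c = blinfun_apply (blinfun_apply T (b * a)) c"
  by (simp add: blact_eq_blinfun_compose)

lemma bract_apply_apply: "blinfun_apply (blinfun_apply (bract T a) b) c = blinfun_apply (blinfun_apply T b) (a * c)"
  by (simp add: bract_apply)

lemma blact_double_evaluation:
  "(\<lambda>a. blinfun_apply (blinfun_apply (blact a T) b) c) =
     blinfun_apply (ract (Blinfun (\<lambda>a. blinfun_apply (blinfun_apply T a) c)) b)"
proof -
  have "bounded_linear (\<lambda>a. blinfun_apply (blinfun_apply T a) c)"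
    by (rule bounded_linear_compose[OF blinfun.bounded_linear_left blinfun.bounded_linear_right])
  then show ?thesis
    by (simp add: blact_apply_apply ract_eq_blinfun_compose bounded_linear_Blinfun_apply fun_eq_iff)
qed

lemma bract_double_evaluation:
  "(\<lambda>a. blinfun_apply (blinfun_apply (bract T a) b) c) = blinfun_apply (lact c (blinfun_apply T b))"
  by (simp add: bract_apply_apply lact_eq_blinfun_compose fun_eq_iff)

definition double_evaluations :: "(('x::real_normed_vector \<Rightarrow>\<^sub>L 'y::real_normed_vector \<Rightarrow>\<^sub>L real) \<Rightarrow> real) set" where
  "double_evaluations = range (\<lambda>(b, c) X. blinfun_apply (blinfun_apply X b) c)"

lemma bounded_linear_double_evaluation: "bounded_linear (\<lambda>X. blinfun_apply (blinfun_apply X b) c)"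
  by (rule bounded_linear_compose[OF blinfun.bounded_linear_left blinfun.bounded_linear_left])

lemma mem_double_evaluations_imp_bounded_linear: "g \<in> double_evaluations \<Longrightarrow> bounded_linear g"
  unfolding double_evaluations_def using bounded_linear_double_evaluation by auto

lemma double_evaluations_separate:
  "X \<noteq> Y \<Longrightarrow> \<exists>g\<in>double_evaluations. g X \<noteq> g Y"
  unfolding double_evaluations_def by (auto intro!: blinfun_eqI)

lemma Hausdorff_space_weak_top_bilinear_forms:
  "Hausdorff_space (weak_top :: ('x::real_normed_vector \<Rightarrow>\<^sub>L 'y::real_normed_vector \<Rightarrow>\<^sub>L real) topology)"
  by (rule Hausdorff_space_weak_top[OF mem_double_evaluations_imp_bounded_linear double_evaluations_separate])

lemma Hausdorff_space_weak_top_dual: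
  "Hausdorff_space (weak_top :: ('x::real_normed_vector \<Rightarrow>\<^sub>L real) topology)"
  by (rule Hausdorff_space_weak_top[where G="range (\<lambda>b \<mu>. blinfun_apply \<mu> b)"])
    (auto intro: blinfun_eqI)

lemma sigmaWC_imp_predual_conditions:
  fixes P :: "('a::{real_normed_algebra_1,banach} \<Rightarrow>\<^sub>L real) set"
  assumes P: "subspace P" "closed P" and "sigmaWC P T"
  shows "blinfun_apply T b \<in> P" and "Blinfun (\<lambda>a. blinfun_apply (blinfun_apply T a) b) \<in> P"
proof -
  have blact: "continuous_map (weak_star_top P) weak_top (\<lambda>a. blact a T)"
    and bract: "continuous_map (weak_star_top P) weak_top (\<lambda>a. bract T a)"
    using assms(3) by (simp_all add: sigmaWC_def)
  have "Blinfun (\<lambda>a. blinfun_apply (blinfun_apply (bract T a) b) 1) \<in> P"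
    by (rule weak_star_weak_continuous_imp_functional_mem[OF P bounded_linear_bract
          bounded_linear_double_evaluation bract])
  then show "blinfun_apply T b \<in> P" by (simp add: bract_apply_apply blinfun_apply_inverse)
  have "Blinfun (\<lambda>a. blinfun_apply (blinfun_apply (blact a T) 1) b) \<in> P"
    by (rule weak_star_weak_continuous_imp_functional_mem[OF P bounded_linear_blact
          bounded_linear_double_evaluation blact])
  then show "Blinfun (\<lambda>a. blinfun_apply (blinfun_apply T a) b) \<in> P" by (simp add: blact_apply_apply)
qed

lemma sigmaWC_imp_WAP:
  assumes "dual_banach_algebra P" "sigmaWC P T"
  shows "WAP T"
  using assms(2) unfolding sigmaWC_def WAP_def
  by (auto intro: weak_star_weak_continuous_imp_weakly_compact[OF assms(1) Hausdorff_space_weak_top_bilinear_forms])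

lemma sigmaWC_imp_weakly_compact:
  fixes P :: "('a::{real_normed_algebra_1,banach} \<Rightarrow>\<^sub>L real) set"
  assumes "dual_banach_algebra P" "sigmaWC P T"
  shows "weakly_compact_map (blinfun_apply T)"
proof -
  have "continuous_map (weak_star_top P) weak_top ((\<lambda>X. blinfun_apply X 1) \<circ> (\<lambda>a. blact a T))"
    using assms(2) unfolding sigmaWC_def
    by (auto intro: continuous_map_compose continuous_map_weak_top_bounded_linear)
  then have "continuous_map (weak_star_top P) weak_top (blinfun_apply T)"
    by (simp add: o_def blact_eq_blinfun_compose)
  then show ?thesis
    by (rule weak_star_weak_continuous_imp_weakly_compact[OF assms(1) Hausdorff_space_weak_top_dual])
qed

lemma predual_conditions_WAP_imp_sigmaWC:
  fixes P :: "('a::{real_normed_algebra,banach} \<Rightarrow>\<^sub>L real) set"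
  assumes P: "subspace P" "closed P" "\<And>\<mu> a. \<mu> \<in> P \<Longrightarrow> lact a \<mu> \<in> P" "\<And>\<mu> a. \<mu> \<in> P \<Longrightarrow> ract \<mu> a \<in> P"
    and T: "\<And>b. blinfun_apply T b \<in> P" "\<And>b. Blinfun (\<lambda>a. blinfun_apply (blinfun_apply T a) b) \<in> P"
    and "WAP T"
  shows "sigmaWC P T"
proof -
  have "double_evaluations \<noteq> {}" by (simp add: double_evaluations_def)
  note cont = weakly_compact_imp_weak_star_weak_continuous[OF P(1,2) _ _ this
      mem_double_evaluations_imp_bounded_linear double_evaluations_separate]
  have "continuous_map (weak_star_top P) weak_top (\<lambda>a. blact a T)"
  proof (rule cont)
    fix g :: "('a \<Rightarrow>\<^sub>L 'a \<Rightarrow>\<^sub>L real) \<Rightarrow> real" assume "g \<in> double_evaluations"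
    then obtain b c where "g = (\<lambda>X. blinfun_apply (blinfun_apply X b) c)"
      by (auto simp: double_evaluations_def)
    moreover have "ract (Blinfun (\<lambda>a. blinfun_apply (blinfun_apply T a) c)) b \<in> P" using T(2) by (rule P(4))
    ultimately show "Blinfun (\<lambda>a. g (blact a T)) \<in> P"
      by (simp add: blact_double_evaluation blinfun_apply_inverse)
  qed (use assms(7) in \<open>simp_all add: WAP_def bounded_linear_blact\<close>)
  moreover have "continuous_map (weak_star_top P) weak_top (\<lambda>a. bract T a)"
  proof (rule cont)
    fix g :: "('a \<Rightarrow>\<^sub>L 'a \<Rightarrow>\<^sub>L real) \<Rightarrow> real" assume "g \<in> double_evaluations"
    then obtain b c where "g = (\<lambda>X. blinfun_apply (blinfun_apply X b) c)"
      by (auto simp: double_evaluations_def)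
    moreover have "lact c (blinfun_apply T b) \<in> P" using T(1) by (rule P(3))
    ultimately show "Blinfun (\<lambda>a. g (bract T a)) \<in> P"
      by (simp add: bract_double_evaluation blinfun_apply_inverse)
  qed (use assms(7) in \<open>simp_all add: WAP_def bounded_linear_bract\<close>)
  ultimately show ?thesis by (simp add: sigmaWC_def)
qed

theorem corollary3p4:
  fixes P :: "('a::{real_normed_algebra_1,banach} \<Rightarrow>\<^sub>L real) set"
    and T :: "'a \<Rightarrow>\<^sub>L ('a \<Rightarrow>\<^sub>L real)"
  assumes "dual_banach_algebra P"
  shows "(sigmaWC P T \<longleftrightarrow>
           ((\<forall>a. blinfun_apply T a \<in> P) \<and>
            (\<forall>b. Blinfun (\<lambda>a. blinfun_apply (blinfun_apply T a) b) \<in> P) \<and>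
            WAP T))
         \<and> (sigmaWC P T \<longrightarrow> weakly_compact_map (blinfun_apply T))"
proof -
  note P = dual_banach_algebraD[OF assms]
  have "(\<forall>a. blinfun_apply T a \<in> P) \<and> (\<forall>b. Blinfun (\<lambda>a. blinfun_apply (blinfun_apply T a) b) \<in> P) \<and>
      WAP T \<and> weakly_compact_map (blinfun_apply T)" if "sigmaWC P T"
    using sigmaWC_imp_predual_conditions[OF P(1,2) that] sigmaWC_imp_WAP[OF assms that]
      sigmaWC_imp_weakly_compact[OF assms that] by blast
  moreover have "sigmaWC P T"
    if "\<forall>a. blinfun_apply T a \<in> P" "\<forall>b. Blinfun (\<lambda>a. blinfun_apply (blinfun_apply T a) b) \<in> P" "WAP T"
    using predual_conditions_WAP_imp_sigmaWC[OF P] that by blast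
  ultimately show ?thesis by blast
qed

end
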